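(* Let $K$ be a planar convex body and let $(t_1,t_2)$ be an open interval of $S^1$ of length less than $\pi$ (with $t_1<t_2$). The following are equivalent: (1) $(t_1,t_2)$ is disjoint from $\mathbf{n}(K)$; (2) there is a single point $p$ with $v_K^+(t)=v_K^-(t)=p$ for all $t\in(t_1,t_2)$; (3) all tangent lines $l_K(t)$, $t\in[t_1,t_2]$, pass through a common point; (4) the point $l_K(t_1)\cap l_K(t_2)$ belongs to $K$.
   Context: A planar convex body is a nonempty compact convex subset of $\mathbb{R}^2$ (possibly with empty interior). For $t\in\mathbb{R}$ let $u_t=(\cos t,\sin t)$, $v_t=(-\sin t,\cos t)$; $p_K(t)=\max_{p\in K}p\cdot u_t$; the tangent line is $l_K(t)=\{p:p\cdot u_t=p_K(t)\}$ and the edge $e_K(t)=K\cap l_K(t)$; $v_K^+(t)$ (resp. $v_K^-(t)$) is the endpoint of $e_K(t)$ farthest in direction $v_t$ (resp. $-v_t$). $\sigma_K$ is the surface area measure of $K$ on $S^1$ (Schneider's $S_1(K,\cdot)$), and $\mathbf{n}(K)$, the set of normal angles of $K$, is the support of $\sigma_K$. *)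

theory Defs
  imports "HOL-Analysis.Analysis"
begin

type_synonym pt = "real \<times> real"

definition planar_convex_body :: "pt set \<Rightarrow> bool" where
  "planar_convex_body K \<longleftrightarrow> K \<noteq> {} \<and> compact K \<and> convex K"

definition uvec :: "real \<Rightarrow> pt" where
  "uvec t = (cos t, sin t)"

definition vvec :: "real \<Rightarrow> pt" where
  "vvec t = (- sin t, cos t)"

definition supp :: "pt set \<Rightarrow> real \<Rightarrow> real" where
  "supp K t = (SUP p\<in>K. p \<bullet> uvec t)"

definition tline :: "pt set \<Rightarrow> real \<Rightarrow> pt set" where
  "tline K t = {p. p \<bullet> uvec t = supp K t}"

definition edge :: "pt set \<Rightarrow> real \<Rightarrow> pt set" where
  "edge K t = K \<inter> tline K t"

definition vplus :: "pt set \<Rightarrow> real \<Rightarrow> pt" where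
  "vplus K t = (THE p. p \<in> edge K t \<and> (\<forall>q\<in>edge K t. q \<bullet> vvec t \<le> p \<bullet> vvec t))"

definition vminus :: "pt set \<Rightarrow> real \<Rightarrow> pt" where
  "vminus K t = (THE p. p \<in> edge K t \<and> (\<forall>q\<in>edge K t. p \<bullet> vvec t \<le> q \<bullet> vvec t))"

definition local_parallel :: "pt set \<Rightarrow> real \<Rightarrow> real set \<Rightarrow> pt set" where
  "local_parallel K e W =
     {x. x \<notin> K \<and> infdist x K \<le> e \<and>
         (\<exists>t\<in>W. x - closest_point K x = infdist x K *\<^sub>R uvec t)}"

text \<open>Surface area measure S_1(K, \<omega>) of a set \<omega> of normal directions (given as a
  set of angles), defined as in Schneider via the local Steiner formula:
  \<lambda>_2(local parallel set) = e S_1(K,\<omega>) + e^2/2 H^1(\<omega>), so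
  S_1(K,\<omega>) = lim_{e\<rightarrow>0+} \<lambda>_2(local parallel set)/e.\<close>
definition sigma :: "pt set \<Rightarrow> real set \<Rightarrow> real" where
  "sigma K W = Lim (at_right 0) (\<lambda>e. measure lborel (local_parallel K e W) / e)"

text \<open>n(K): the support of \<sigma>_K, as a (2\<pi>-periodic) set of angles.\<close>
definition normal_angles :: "pt set \<Rightarrow> real set" where
  "normal_angles K = {t. \<forall>e>0. sigma K {t - e<..<t + e} > 0}"

end

theory Submission
  imports Defs
begin

text \<open>
  Let proj be the nearest-point map of K and dK the distance to K. The local parallel set over
  the normal angles W is the union of the outer normal segments erected at the points of the
  edges e_K(t), t \<in> W. Shifting these segments inward is 1-Lipschitz, so the area of the local
  parallel set is superadditive in its width e, and \<sigma>_K(W) is the infimum of area/e. If all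
  edges over (t1, t2) are one point p, the parallel set lies in a disc of radius 2e around p and
  \<sigma> vanishes. Otherwise the edges sweep a segment of positive length in some direction w
  (within one edge by convexity, or across edges by continuity of the edge point), and
  y \<mapsto> (proj y \<bullet> w, dK y) maps the parallel set onto a rectangle of area proportional to e, so
  \<sigma> > 0. Edges that are locally constant on the connected interval are constant.

  Since t2 - t1 < \<pi>, each u_t with t \<in> [t1, t2] is a nonnegative combination of u_t1 and u_t2;
  hence a point of K on l_K(t1) and l_K(t2) lies on every l_K(t) in between, and a point on all
  of them is the only point of each e_K(t), t \<in> (t1, t2).
\<close>

section \<open>Lipschitz images and superadditive functions\<close>

lemma measure_UN_balls_scaled_le:
  fixes c c' :: "'i \<Rightarrow> 'a::euclidean_space"
  assumes "countable C" and r: "\<And>i. i \<in> C \<Longrightarrow> r i > 0" and "L \<ge> 0"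
    and disj: "pairwise (\<lambda>i j. disjnt (ball (c i) (r i)) (ball (c j) (r j))) C"
    and sub: "(\<Union>i\<in>C. ball (c i) (r i)) \<subseteq> U" and U: "U \<in> lmeasurable"
  shows "(\<Union>i\<in>C. ball (c' i) (L * r i)) \<in> lmeasurable"
    and "measure lebesgue (\<Union>i\<in>C. ball (c' i) (L * r i)) \<le> L ^ DIM('a) * measure lebesgue U"
proof -
  have finite_le: "measure lebesgue (\<Union>i\<in>F. ball (c' i) (L * r i)) \<le> L ^ DIM('a) * measure lebesgue U"
    if "F \<subseteq> C" "finite F" for F
  proof -
    have "measure lebesgue (\<Union>i\<in>F. ball (c' i) (L * r i))
        \<le> (\<Sum>i\<in>F. measure lebesgue (ball (c' i) (L * r i)))"
      by (rule measure_UNION_le[OF \<open>finite F\<close>]) simp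
    also have "\<dots> = L ^ DIM('a) * (\<Sum>i\<in>F. measure lebesgue (ball (c i) (r i)))"
      unfolding sum_distrib_left
    proof (intro sum.cong refl)
      fix i assume "i \<in> F"
      then have "r i \<ge> 0" using r \<open>F \<subseteq> C\<close> less_imp_le by blast
      then show "measure lebesgue (ball (c' i) (L * r i)) = L ^ DIM('a) * measure lebesgue (ball (c i) (r i))"
        using \<open>L \<ge> 0\<close> content_ball_conv_unit_ball[of "L * r i" "c' i"]
          content_ball_conv_unit_ball[of "r i" "c i"]
        by (simp add: power_mult_distrib)
    qed
    also have "(\<Sum>i\<in>F. measure lebesgue (ball (c i) (r i))) = measure lebesgue (\<Union>i\<in>F. ball (c i) (r i))"
      by (rule measure_UNION'[symmetric, OF \<open>finite F\<close> lmeasurable_ball pairwise_subset[OF disj \<open>F \<subseteq> C\<close>]])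
    also have "\<dots> \<le> measure lebesgue U"
      using sub \<open>F \<subseteq> C\<close> fmeasurableD[OF fmeasurable.finite_UN[OF \<open>finite F\<close> lmeasurable_ball]]
      by (intro measure_mono_fmeasurable[OF _ _ U]) auto
    finally show ?thesis using \<open>L \<ge> 0\<close> by (simp add: mult_left_mono)
  qed
  show "(\<Union>i\<in>C. ball (c' i) (L * r i)) \<in> lmeasurable"
    by (rule fmeasurable_UN_bound[OF \<open>countable C\<close> _ finite_le]) auto
  show "measure lebesgue (\<Union>i\<in>C. ball (c' i) (L * r i)) \<le> L ^ DIM('a) * measure lebesgue U"
    by (rule measure_UN_bound[OF \<open>countable C\<close> _ finite_le]) auto
qed

lemma Vitali_balls_in_open:
  fixes T :: "'a::euclidean_space set"
  assumes "T \<subseteq> U" "open U"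
  obtains C where "countable C"
    and "\<And>i. i \<in> C \<Longrightarrow> fst i \<in> T \<and> snd i > 0 \<and> ball (fst i) (snd i) \<subseteq> U"
    and "pairwise (\<lambda>i j. disjnt (ball (fst i) (snd i)) (ball (fst j) (snd j))) C"
    and "negligible (T - (\<Union>i\<in>C. ball (fst i) (snd i)))"
proof -
  define I where "I = {(x, r). x \<in> T \<and> 0 < r \<and> ball x r \<subseteq> U}"
  have cover: "\<exists>i. i \<in> I \<and> x \<in> ball (fst i) (snd i) \<and> snd i < e" if x: "x \<in> T" "0 < e" for x e
  proof -
    obtain l where "l > 0" "ball x l \<subseteq> U" using assms x by (meson openE subsetD)
    then show ?thesis using x by (intro exI[of _ "(x, min l (e/2))"]) (auto simp: I_def)
  qed
  obtain C where "countable C" "C \<subseteq> I"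
    "pairwise (\<lambda>i j. disjnt (ball (fst i) (snd i)) (ball (fst j) (snd j))) C"
    "negligible (T - (\<Union>i\<in>C. ball (fst i) (snd i)))"
    by (rule Vitali_covering_theorem_balls[of T I fst snd, OF cover])
  moreover have "fst i \<in> T \<and> snd i > 0 \<and> ball (fst i) (snd i) \<subseteq> U" if "i \<in> C" for i
    using \<open>C \<subseteq> I\<close> that unfolding I_def by (cases i) auto
  ultimately show ?thesis using that by blast
qed

lemma measure_Lipschitz_image_le_open:
  fixes G :: "'a::euclidean_space \<Rightarrow> 'a"
  assumes "T \<subseteq> U" "open U" "U \<in> lmeasurable" and "L > 0"
    and lip: "\<And>x y. x \<in> T \<Longrightarrow> y \<in> T \<Longrightarrow> dist (G x) (G y) \<le> L * dist x y"
    and "R \<in> lmeasurable" "R \<subseteq> G ` T"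
  shows "measure lebesgue R \<le> L ^ DIM('a) * measure lebesgue U"
proof -
  obtain C where "countable C"
    and C: "\<And>i. i \<in> C \<Longrightarrow> fst i \<in> T \<and> snd i > 0 \<and> ball (fst i) (snd i) \<subseteq> U"
    and disj: "pairwise (\<lambda>i j. disjnt (ball (fst i) (snd i)) (ball (fst j) (snd j))) C"
    and neg: "negligible (T - (\<Union>i\<in>C. ball (fst i) (snd i)))"
    using Vitali_balls_in_open[OF assms(1,2)] by blast
  define N where "N = G ` (T - (\<Union>i\<in>C. ball (fst i) (snd i)))"
  define B where "B = (\<Union>i\<in>C. ball (G (fst i)) (L * snd i))"
  have "negligible N"
    unfolding N_def
  proof (rule negligible_locally_Lipschitz_image[OF order_refl neg])
    fix x assume "x \<in> T - (\<Union>i\<in>C. ball (fst i) (snd i))"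
    then show "\<exists>T' B. open T' \<and> x \<in> T' \<and>
        (\<forall>y \<in> (T - (\<Union>i\<in>C. ball (fst i) (snd i))) \<inter> T'. norm (G y - G x) \<le> B * norm (y - x))"
      using lip by (intro exI[of _ UNIV] exI[of _ L]) (auto simp: dist_norm)
  qed
  have radius: "snd i > 0" if "i \<in> C" for i using C[OF that] by blast
  have "(\<Union>i\<in>C. ball (fst i) (snd i)) \<subseteq> U" using C by blast
  note B = measure_UN_balls_scaled_le[where c = fst and r = snd and c' = "\<lambda>i. G (fst i)",
      OF \<open>countable C\<close> radius less_imp_le[OF \<open>L > 0\<close>] disj this assms(3), folded B_def]
  have "R \<subseteq> N \<union> B"
  proof
    fix y assume "y \<in> R"
    then obtain x where x: "x \<in> T" "y = G x" using assms(7) by auto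
    show "y \<in> N \<union> B"
    proof (cases "\<exists>i\<in>C. x \<in> ball (fst i) (snd i)")
      case True
      then obtain i where i: "i \<in> C" "x \<in> ball (fst i) (snd i)" by blast
      then have "dist (G (fst i)) y \<le> L * dist (fst i) x" using lip C x by blast
      also have "\<dots> < L * snd i" using i \<open>L > 0\<close> by simp
      finally show ?thesis using i by (auto simp: B_def)
    next
      case False
      then show ?thesis using x by (auto simp: N_def)
    qed
  qed
  have NB: "N \<union> B \<in> lmeasurable"
    by (rule fmeasurable.Un[OF negligible_imp_measurable[OF \<open>negligible N\<close>] B(1)])
  have "measure lebesgue R \<le> measure lebesgue (N \<union> B)"
    by (rule measure_mono_fmeasurable[OF \<open>R \<subseteq> N \<union> B\<close> _ NB]) (use assms(6) in auto)
  also have "\<dots> \<le> measure lebesgue N + measure lebesgue B"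
    by (rule measure_Un_le) (use negligible_imp_measurable[OF \<open>negligible N\<close>] B(1) in auto)
  finally show ?thesis using \<open>negligible N\<close> B(2) by (simp add: negligible_imp_measure0)
qed

lemma measure_Lipschitz_image_le:
  fixes G :: "'a::euclidean_space \<Rightarrow> 'a"
  assumes "T \<in> lmeasurable" and "L > 0"
    and lip: "\<And>x y. x \<in> T \<Longrightarrow> y \<in> T \<Longrightarrow> dist (G x) (G y) \<le> L * dist x y"
    and "R \<in> lmeasurable" "R \<subseteq> G ` T"
  shows "measure lebesgue R \<le> L ^ DIM('a) * measure lebesgue T"
proof (rule field_le_epsilon)
  fix d :: real assume "d > 0"
  then have "d / L ^ DIM('a) > 0" using \<open>L > 0\<close> by simp
  then obtain U where U: "open U" "T \<subseteq> U" "U - T \<in> lmeasurable"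
    and "emeasure lebesgue (U - T) < ennreal (d / L ^ DIM('a))"
    using sets_lebesgue_outer_open[OF fmeasurableD[OF \<open>T \<in> lmeasurable\<close>]] by blast
  then have "measure lebesgue (U - T) < d / L ^ DIM('a)"
    by (metis emeasure_eq_measure2 ennreal_leI not_less)
  moreover have "U \<in> lmeasurable" "measure lebesgue U = measure lebesgue T + measure lebesgue (U - T)"
    using assms(1) U by (auto simp: measurable_measure_Diff dest!: fmeasurable_Diff_D)
  ultimately have "L ^ DIM('a) * measure lebesgue U \<le> L ^ DIM('a) * measure lebesgue T + d"
    using \<open>L > 0\<close> by (simp add: field_simps)
  moreover have "measure lebesgue R \<le> L ^ DIM('a) * measure lebesgue U"
    using measure_Lipschitz_image_le_open[OF U(2,1) \<open>U \<in> lmeasurable\<close> \<open>L > 0\<close> lip assms(4,5)] .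
  ultimately show "measure lebesgue R \<le> L ^ DIM('a) * measure lebesgue T + d" by linarith
qed

lemma mem_box_Pair: "(x, y) \<in> box (a1, b1) (a2, b2) \<longleftrightarrow> x \<in> {a1<..<a2} \<and> y \<in> {b1<..<b2}"
  for x y a1 a2 b1 b2 :: real
  by (auto simp: box_def Basis_prod_def inner_Pair)

lemma measure_box_Pair:
  fixes a1 a2 b1 b2 :: real
  assumes "a1 \<le> a2" "b1 \<le> b2"
  shows "measure lebesgue (box (a1, b1) (a2, b2)) = (a2 - a1) * (b2 - b1)"
  using assms by (simp add: measure_lborel_box_eq Basis_prod_def inner_Pair
      measure_completion[of "box (a1, b1) (a2, b2)" lborel, symmetric])

lemma quotient_le_of_superadditive:
  fixes m :: "real \<Rightarrow> real"
  assumes nonneg: "\<And>e. e > 0 \<Longrightarrow> m e \<ge> 0"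
    and mono: "\<And>e e'. 0 < e \<Longrightarrow> e \<le> e' \<Longrightarrow> m e \<le> m e'"
    and superadd: "\<And>e k. e > 0 \<Longrightarrow> k \<ge> 1 \<Longrightarrow> real k * m e \<le> m (real k * e)"
    and "0 < e" "e < e'"
  shows "m e / e \<le> m e' / (e' - e)"
proof -
  define k where "k = nat \<lfloor>e' / e\<rfloor>"
  have "e' / e > 1" using assms(4,5) by simp
  then have k: "k \<ge> 1" "real k \<le> e' / e" "e' / e < real k + 1"
    unfolding k_def by linarith+
  then have "real k * e \<le> e'" "e' - e < real k * e"
    using \<open>0 < e\<close> by (simp_all add: field_simps)
  have "real k * m e \<le> m e'"
    using superadd[OF \<open>0 < e\<close> k(1)] mono[OF _ \<open>real k * e \<le> e'\<close>] \<open>0 < e\<close> k(1) by simp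
  have "m e / e = (real k * m e) / (real k * e)" using k(1) by simp
  also have "\<dots> \<le> m e' / (real k * e)"
    using \<open>real k * m e \<le> m e'\<close> k(1) \<open>0 < e\<close> by (intro divide_right_mono) auto
  also have "\<dots> \<le> m e' / (e' - e)"
    using \<open>e' - e < real k * e\<close> assms(5) nonneg[of e'] \<open>0 < e\<close> by (intro divide_left_mono) auto
  finally show ?thesis .
qed

lemma tendsto_Inf_quotient_superadditive:
  fixes m :: "real \<Rightarrow> real"
  assumes nonneg: "\<And>e. e > 0 \<Longrightarrow> m e \<ge> 0"
    and mono: "\<And>e e'. 0 < e \<Longrightarrow> e \<le> e' \<Longrightarrow> m e \<le> m e'"
    and superadd: "\<And>e k. e > 0 \<Longrightarrow> k \<ge> 1 \<Longrightarrow> real k * m e \<le> m (real k * e)"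
  shows "((\<lambda>e. m e / e) \<longlongrightarrow> (INF e\<in>{0<..}. m e / e)) (at_right 0)"
proof (rule order_tendstoI)
  let ?L = "INF e\<in>{0<..}. m e / e"
  have bdd: "bdd_below ((\<lambda>e. m e / e) ` {0<..})"
    using nonneg by (intro bdd_belowI[of _ 0]) auto
  fix a
  show "eventually (\<lambda>e. a < m e / e) (at_right 0)" if "a < ?L"
    using eventually_at_right_less[of 0]
  proof eventually_elim
    case (elim e)
    then show ?case using cINF_lower[OF bdd, of e] \<open>a < ?L\<close> by simp
  qed
  assume "?L < a"
  then obtain e' where "e' > 0" "m e' / e' < a"
    using bdd by (subst (asm) cINF_less_iff) auto
  then have "((\<lambda>e. m e' / (e' - e)) \<longlongrightarrow> m e' / (e' - 0)) (at_right 0)"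
    by (intro tendsto_intros) auto
  then have "eventually (\<lambda>e. m e' / (e' - e) < a) (at_right 0)"
    using \<open>m e' / e' < a\<close> by (intro order_tendstoD(2)) auto
  moreover have "eventually (\<lambda>e. 0 < e \<and> e < e') (at_right 0)"
    using \<open>e' > 0\<close> by (simp add: eventually_at_right_field) (meson less_eq_real_def)
  ultimately show "eventually (\<lambda>e. m e / e < a) (at_right 0)"
    by eventually_elim (use quotient_le_of_superadditive[OF assms] in fastforce)
qed

section \<open>Edges and tangent lines of a planar convex body\<close>

lemma inner_vvec_uvec: "vvec t \<bullet> uvec s = sin (s - t)"
  by (simp add: uvec_def vvec_def sin_diff algebra_simps)

lemma norm_uvec [simp]: "norm (uvec t) = 1"
  by (simp add: uvec_def norm_Pair)

lemma uvec_vvec_decomp: "x = (x \<bullet> uvec t) *\<^sub>R uvec t + (x \<bullet> vvec t) *\<^sub>R vvec t"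
proof (cases x)
  case (Pair a b)
  have "a = (a * cos t + b * sin t) * cos t - (b * cos t - a * sin t) * sin t"
    "b = (a * cos t + b * sin t) * sin t + (b * cos t - a * sin t) * cos t"
    by (simp_all add: algebra_simps)
      (metis mult.commute mult.left_commute sin_cos_squared_add3 mult_1_right distrib_left)+
  then show ?thesis using Pair by (simp add: uvec_def vvec_def algebra_simps)
qed

lemma uvec_vvec_eqI: "x \<bullet> uvec t = y \<bullet> uvec t \<Longrightarrow> x \<bullet> vvec t = y \<bullet> vvec t \<Longrightarrow> x = y"
  by (metis uvec_vvec_decomp)

lemma continuous_on_uvec: "continuous_on A uvec"
  unfolding uvec_def by (intro continuous_intros)

lemma uvec_combination:
  "sin (t2 - t1) *\<^sub>R uvec t = sin (t2 - t) *\<^sub>R uvec t1 + sin (t - t1) *\<^sub>R uvec t2"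
  by (simp add: uvec_def sin_diff algebra_simps)

lemma eq_0_if_inner_uvec_nonpos:
  assumes "t1 < t" "t < t2" "t - t1 < pi" "t2 - t < pi"
    and "a \<bullet> uvec t = 0" "a \<bullet> uvec t1 \<le> 0" "a \<bullet> uvec t2 \<le> 0"
  shows "a = 0"
proof -
  have lin: "a \<bullet> uvec s = (a \<bullet> vvec t) * sin (s - t)" for s
    using arg_cong[OF uvec_vvec_decomp[of a t], of "\<lambda>x. x \<bullet> uvec s"] assms(5)
    by (simp add: inner_add_left inner_vvec_uvec)
  have "sin (t - t1) > 0" "sin (t2 - t) > 0" using assms by (intro sin_gt_zero; simp)+
  moreover have "sin (t1 - t) = - sin (t - t1)" by (metis minus_diff_eq sin_minus)
  ultimately have "a \<bullet> vvec t \<ge> 0" "a \<bullet> vvec t \<le> 0"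
    using lin[of t1] lin[of t2] assms(6,7) by (auto simp: mult_le_0_iff zero_le_mult_iff)
  then have "a \<bullet> vvec t = 0" by simp
  then show ?thesis using uvec_vvec_eqI[of a t 0] assms(5) by simp
qed

locale convex_body =
  fixes K :: "pt set"
  assumes compact_K: "compact K" and convex_K: "convex K" and K_nonempty: "K \<noteq> {}"
begin

lemma closed_K: "closed K"
  by (rule compact_imp_closed[OF compact_K])

lemma bdd_above_inner: "bdd_above ((\<lambda>p. p \<bullet> w) ` K)"
  by (intro bounded_imp_bdd_above compact_imp_bounded compact_continuous_image compact_K)
     (intro continuous_intros)

lemma inner_le_supp: "k \<in> K \<Longrightarrow> k \<bullet> uvec t \<le> supp K t"
  unfolding supp_def by (rule cSUP_upper[OF _ bdd_above_inner])

lemma supp_attained: "\<exists>x\<in>K. x \<bullet> uvec t = supp K t"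
proof -
  obtain x where "x \<in> K" "\<forall>k\<in>K. k \<bullet> uvec t \<le> x \<bullet> uvec t"
    using continuous_attains_sup[OF compact_K K_nonempty
        continuous_on_inner[OF continuous_on_id continuous_on_const]]
    by blast
  then show ?thesis
    unfolding supp_def by (intro bexI[of _ x] cSup_eq_maximum[symmetric]) auto
qed

lemma mem_edge_iff: "x \<in> edge K t \<longleftrightarrow> x \<in> K \<and> x \<bullet> uvec t = supp K t"
  by (simp add: edge_def tline_def)

lemma mem_edge_iff_maximizer: "x \<in> edge K t \<longleftrightarrow> x \<in> K \<and> (\<forall>k\<in>K. k \<bullet> uvec t \<le> x \<bullet> uvec t)"
  using inner_le_supp supp_attained unfolding mem_edge_iff by (metis order.antisym)

lemma edge_nonempty: "edge K t \<noteq> {}"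
  by (metis empty_iff mem_edge_iff supp_attained)

lemma compact_edge: "compact (edge K t)"
  unfolding edge_def tline_def
  by (intro compact_Int_closed compact_K closed_Collect_eq continuous_intros)

lemma convex_edge: "convex (edge K t)"
  unfolding edge_def tline_def
  using convex_hyperplane[of "uvec t" "supp K t"] convex_K by (simp add: inner_commute convex_Int)

lemma edge_eqI: "x \<in> edge K t \<Longrightarrow> y \<in> edge K t \<Longrightarrow> x \<bullet> vvec t = y \<bullet> vvec t \<Longrightarrow> x = y"
  by (metis uvec_vvec_eqI mem_edge_iff)

lemma vplus_edge: "vplus K t \<in> edge K t" "q \<in> edge K t \<Longrightarrow> q \<bullet> vvec t \<le> vplus K t \<bullet> vvec t"
proof -
  obtain x where "x \<in> edge K t" "\<forall>q\<in>edge K t. q \<bullet> vvec t \<le> x \<bullet> vvec t"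
    using continuous_attains_sup[OF compact_edge[of t] edge_nonempty
        continuous_on_inner[OF continuous_on_id continuous_on_const]]
    by blast
  then have "\<exists>!p. p \<in> edge K t \<and> (\<forall>q\<in>edge K t. q \<bullet> vvec t \<le> p \<bullet> vvec t)"
    by (intro ex1I[of _ x]) (auto intro: edge_eqI order.antisym)
  from theI'[OF this] show "vplus K t \<in> edge K t" "q \<in> edge K t \<Longrightarrow> q \<bullet> vvec t \<le> vplus K t \<bullet> vvec t"
    unfolding vplus_def by auto
qed

lemma vminus_edge: "vminus K t \<in> edge K t" "q \<in> edge K t \<Longrightarrow> vminus K t \<bullet> vvec t \<le> q \<bullet> vvec t"
proof -
  obtain x where "x \<in> edge K t" "\<forall>q\<in>edge K t. x \<bullet> vvec t \<le> q \<bullet> vvec t"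
    using continuous_attains_inf[OF compact_edge[of t] edge_nonempty
        continuous_on_inner[OF continuous_on_id continuous_on_const]]
    by blast
  then have "\<exists>!p. p \<in> edge K t \<and> (\<forall>q\<in>edge K t. p \<bullet> vvec t \<le> q \<bullet> vvec t)"
    by (intro ex1I[of _ x]) (auto intro: edge_eqI order.antisym)
  from theI'[OF this] show "vminus K t \<in> edge K t" "q \<in> edge K t \<Longrightarrow> vminus K t \<bullet> vvec t \<le> q \<bullet> vvec t"
    unfolding vminus_def by auto
qed

lemma vplus_vminus_eq_iff: "vplus K t = q \<and> vminus K t = q \<longleftrightarrow> edge K t = {q}"
proof
  assume "vplus K t = q \<and> vminus K t = q"
  then have "x = q" if "x \<in> edge K t" for x
    using that vplus_edge[where t = t] vminus_edge[where t = t] by (metis edge_eqI order.antisym)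
  then show "edge K t = {q}"
    using vplus_edge(1)[where t = t] \<open>vplus K t = q \<and> vminus K t = q\<close> by blast
qed (use vplus_edge(1) vminus_edge(1) in blast)

lemma vplus_eqI: "edge K t = {q} \<Longrightarrow> vplus K t = q"
  using vplus_vminus_eq_iff by blast

lemma edge_eq_if_mem_tlines:
  assumes "t2 - t1 < pi" and p: "\<forall>s\<in>{t1..t2}. p \<in> tline K s" and "t \<in> {t1<..<t2}"
  shows "edge K t = {p}"
proof -
  have "p \<bullet> uvec s = supp K s" if "s \<in> {t1..t2}" for s
    using p that by (simp add: tline_def)
  then have "x = p" if "x \<in> edge K t" for x
    using that assms inner_le_supp[of x] \<open>t \<in> {t1<..<t2}\<close>
    by (intro eq_0_if_inner_uvec_nonpos[of t1 t t2, THEN right_minus_eq[THEN iffD1]])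
       (auto simp: inner_diff_left mem_edge_iff)
  then show ?thesis using edge_nonempty[of t] by blast
qed

lemma mem_tline_if_mem_tline_ends:
  assumes "t1 < t2" "t2 - t1 < pi" "p \<in> K" "p \<in> tline K t1" "p \<in> tline K t2" "t \<in> {t1..t2}"
  shows "p \<in> tline K t"
proof -
  have "sin (t2 - t1) > 0" using assms by (intro sin_gt_zero) auto
  have "sin (t2 - t) \<ge> 0" "sin (t - t1) \<ge> 0" using assms by (intro sin_ge_zero; simp)+
  have "k \<bullet> uvec t \<le> p \<bullet> uvec t" if "k \<in> K" for k
  proof -
    have comb: "sin (t2 - t1) * (z \<bullet> uvec t) = sin (t2 - t) * (z \<bullet> uvec t1) + sin (t - t1) * (z \<bullet> uvec t2)"
      for z
      using arg_cong[OF uvec_combination[of t2 t1 t], of "\<lambda>w. z \<bullet> w"] by (simp add: inner_add_right)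
    have "k \<bullet> uvec t1 \<le> p \<bullet> uvec t1" "k \<bullet> uvec t2 \<le> p \<bullet> uvec t2"
      using inner_le_supp[OF that] assms(4,5) by (auto simp: tline_def)
    then have "sin (t2 - t1) * (k \<bullet> uvec t) \<le> sin (t2 - t1) * (p \<bullet> uvec t)"
      unfolding comb using \<open>sin (t2 - t) \<ge> 0\<close> \<open>sin (t - t1) \<ge> 0\<close>
      by (intro add_mono mult_left_mono)
    then show ?thesis using \<open>sin (t2 - t1) > 0\<close> by simp
  qed
  then have "p \<in> edge K t" using \<open>p \<in> K\<close> mem_edge_iff_maximizer by blast
  then show ?thesis by (simp add: edge_def)
qed

lemma mem_tline_if_edges_eq:
  assumes "\<forall>s\<in>{t1<..<t2}. edge K s = {p}" and "t1 < t2" "t \<in> {t1..t2}"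
  shows "p \<in> tline K t"
proof -
  have "edge K ((t1 + t2) / 2) = {p}" using assms by simp
  then have "p \<in> K" by (auto simp: edge_def)
  obtain x where x: "x \<in> K" "x \<bullet> uvec t = supp K t" using supp_attained by blast
  have bound: "(x - p) \<bullet> uvec s \<le> 0" if "s \<in> {t1<..<t2}" for s
  proof -
    have "p \<in> edge K s" using assms(1) that by blast
    then show ?thesis using inner_le_supp[OF x(1), of s] by (simp add: inner_diff_left mem_edge_iff)
  qed
  have "continuous_on (closure {t1<..<t2}) (\<lambda>s. (x - p) \<bullet> uvec s)"
    by (intro continuous_intros continuous_on_compose2[OF continuous_on_uvec]) auto
  moreover have "t \<in> closure {t1<..<t2}" using assms(2,3) by simp
  ultimately have "(x - p) \<bullet> uvec t \<le> 0"
    by (rule continuous_le_on_closure) (rule bound)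
  then show ?thesis
    using x inner_le_supp[OF \<open>p \<in> K\<close>, of t] by (simp add: inner_diff_left tline_def)
qed

lemma edges_constant_iff_common_tangent_point:
  assumes "t1 < t2" "t2 - t1 < pi"
  shows "(\<exists>p. \<forall>t\<in>{t1<..<t2}. edge K t = {p}) \<longleftrightarrow> (\<exists>p. \<forall>t\<in>{t1..t2}. p \<in> tline K t)"
  using mem_tline_if_edges_eq[OF _ assms(1)] edge_eq_if_mem_tlines[OF assms(2)] by meson

lemma common_tangent_point_iff_mem_tline_ends:
  assumes "t1 < t2" "t2 - t1 < pi"
  shows "(\<exists>p. \<forall>t\<in>{t1..t2}. p \<in> tline K t) \<longleftrightarrow> (\<exists>p\<in>K. p \<in> tline K t1 \<inter> tline K t2)"
proof
  assume "\<exists>p. \<forall>t\<in>{t1..t2}. p \<in> tline K t"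
  then obtain p where p: "\<forall>t\<in>{t1..t2}. p \<in> tline K t" by blast
  then have "edge K ((t1 + t2) / 2) = {p}" using assms by (intro edge_eq_if_mem_tlines) auto
  then have "p \<in> K" by (auto simp: edge_def)
  moreover have "p \<in> tline K t1 \<inter> tline K t2" using p assms(1) by simp
  ultimately show "\<exists>p\<in>K. p \<in> tline K t1 \<inter> tline K t2" by blast
next
  assume "\<exists>p\<in>K. p \<in> tline K t1 \<inter> tline K t2"
  then show "\<exists>p. \<forall>t\<in>{t1..t2}. p \<in> tline K t" using mem_tline_if_mem_tline_ends[OF assms] by blast
qed

end

section \<open>Local parallel sets and the surface area measure\<close>

lemma closest_point_eqI:
  fixes S :: "'a::euclidean_space set"
  assumes "convex S" "closed S" "x \<in> S" and normal: "\<And>k. k \<in> S \<Longrightarrow> (y - x) \<bullet> (k - x) \<le> 0"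
  shows "closest_point S y = x"
proof -
  have "dist y x \<le> dist y k" if "k \<in> S" for k
  proof -
    have "(y - k) \<bullet> (y - k) = (y - x) \<bullet> (y - x) + (x - k) \<bullet> (x - k) - 2 * ((y - x) \<bullet> (k - x))"
      by (simp add: inner_diff_left inner_diff_right inner_commute algebra_simps)
    then have "(y - x) \<bullet> (y - x) \<le> (y - k) \<bullet> (y - k)"
      using normal[OF that] inner_ge_zero[of "x - k"] by linarith
    then show ?thesis by (simp add: dist_norm norm_le)
  qed
  then show ?thesis using closest_point_unique[OF assms(1-3)] by metis
qed

text \<open>Moving two points of a convex set outward along outer normals at them never brings
  them closer together.\<close>

lemma dist_le_dist_add_normals:
  fixes p1 p2 u1 u2 :: "'a::real_inner"
  assumes "norm u1 = 1" "norm u2 = 1" "u1 \<bullet> (p2 - p1) \<le> 0" "u2 \<bullet> (p1 - p2) \<le> 0"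
    and "d1 \<ge> 0" "d2 \<ge> 0" "r \<ge> 0"
  shows "dist (p1 + d1 *\<^sub>R u1) (p2 + d2 *\<^sub>R u2) \<le> dist (p1 + (d1 + r) *\<^sub>R u1) (p2 + (d2 + r) *\<^sub>R u2)"
proof -
  define Y where "Y = (p1 + d1 *\<^sub>R u1) - (p2 + d2 *\<^sub>R u2)"
  define U where "U = u1 - u2"
  have "u1 \<bullet> u2 \<le> 1" using norm_cauchy_schwarz[of u1 u2] assms(1,2) by simp
  moreover have "u1 \<bullet> u1 = 1" "u2 \<bullet> u2 = 1" using assms(1,2) by (simp_all add: norm_eq_1)
  ultimately have "Y \<bullet> U = (p1 - p2) \<bullet> (u1 - u2) + (d1 + d2) * (1 - u1 \<bullet> u2)"
    unfolding Y_def U_def by (simp add: inner_diff_left inner_diff_right inner_commute algebra_simps)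
  moreover have "(p1 - p2) \<bullet> (u1 - u2) \<ge> 0"
    using assms(3,4) by (simp add: inner_diff_left inner_diff_right inner_commute)
  ultimately have "Y \<bullet> U \<ge> 0" using \<open>u1 \<bullet> u2 \<le> 1\<close> assms(5,6) by simp
  have "(Y + r *\<^sub>R U) \<bullet> (Y + r *\<^sub>R U) = Y \<bullet> Y + 2 * r * (Y \<bullet> U) + r * r * (U \<bullet> U)"
    by (simp add: inner_add_left inner_add_right inner_commute algebra_simps)
  then have "norm Y \<le> norm (Y + r *\<^sub>R U)"
    using \<open>Y \<bullet> U \<ge> 0\<close> assms(7) by (simp add: norm_le)
  moreover have "Y + r *\<^sub>R U = (p1 + (d1 + r) *\<^sub>R u1) - (p2 + (d2 + r) *\<^sub>R u2)"
    unfolding Y_def U_def by (simp add: algebra_simps)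
  ultimately have "norm Y \<le> norm ((p1 + (d1 + r) *\<^sub>R u1) - (p2 + (d2 + r) *\<^sub>R u2))"
    by simp
  then show ?thesis by (simp only: dist_norm Y_def)
qed

lemma greaterThanLessThan_eq_UN_atLeastAtMost:
  "{a<..<b} = (\<Union>n. {a + 1 / real (Suc n) .. b - 1 / real (Suc n)})" for a b :: real
proof (intro set_eqI iffI)
  fix x assume "x \<in> {a<..<b}"
  then obtain n where "inverse (real (Suc n)) < min (x - a) (b - x)"
    using reals_Archimedean[of "min (x - a) (b - x)"] by auto
  then have "x \<in> {a + 1 / real (Suc n) .. b - 1 / real (Suc n)}"
    by (simp add: inverse_eq_divide)
  then show "x \<in> (\<Union>n. {a + 1 / real (Suc n) .. b - 1 / real (Suc n)})" by blast
next
  fix x assume "x \<in> (\<Union>n. {a + 1 / real (Suc n) .. b - 1 / real (Suc n)})"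
  then obtain n where "a + 1 / real (Suc n) \<le> x" "x \<le> b - 1 / real (Suc n)" by auto
  moreover have "1 / real (Suc n) > 0" by simp
  ultimately show "x \<in> {a<..<b}" by (simp only: greaterThanLessThan_iff) linarith
qed

lemma uvec_image_Ioo_borel: "uvec ` {a<..<b} \<in> sets borel"
proof -
  have "uvec ` {a + 1 / real (Suc n) .. b - 1 / real (Suc n)} \<in> sets borel" for n
    by (intro borel_closed compact_imp_closed compact_continuous_image continuous_on_uvec compact_Icc)
  then show ?thesis
    by (subst greaterThanLessThan_eq_UN_atLeastAtMost) (auto simp: image_UN)
qed

context convex_body
begin

abbreviation proj :: "pt \<Rightarrow> pt" where "proj \<equiv> closest_point K"

abbreviation dK :: "pt \<Rightarrow> real" where "dK y \<equiv> infdist y K"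

lemma proj_in_K: "proj y \<in> K"
  using closest_point_in_set[OF closed_K K_nonempty] .

lemma dK_eq_norm: "dK y = norm (y - proj y)"
  using setdist_closest_point[OF closed_K K_nonempty, of y]
  by (simp add: infdist_eq_setdist dist_norm)

lemma dK_pos_iff: "0 < dK y \<longleftrightarrow> y \<notin> K"
  by (metis infdist_pos_not_in_closed[OF closed_K K_nonempty] infdist_zero less_irrefl)

lemma proj_normal_ray:
  assumes "x \<in> edge K s" "d > 0"
  shows "proj (x + d *\<^sub>R uvec s) = x" and "dK (x + d *\<^sub>R uvec s) = d"
proof -
  show "proj (x + d *\<^sub>R uvec s) = x"
    using assms by (intro closest_point_eqI[OF convex_K closed_K])
      (auto simp: mem_edge_iff_maximizer inner_diff_right inner_commute mult_le_0_iff)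
  then show "dK (x + d *\<^sub>R uvec s) = d" using assms(2) by (simp add: dK_eq_norm)
qed

lemma proj_in_edge:
  assumes "y - proj y = dK y *\<^sub>R uvec s" "y \<notin> K"
  shows "proj y \<in> edge K s"
proof -
  have "dK y * (uvec s \<bullet> (k - proj y)) \<le> 0" if "k \<in> K" for k
    using closest_point_dot[OF convex_K closed_K that, of y] assms(1) by simp
  then have "k \<bullet> uvec s \<le> proj y \<bullet> uvec s" if "k \<in> K" for k
    using that dK_pos_iff[of y] assms(2) by (fastforce simp: mult_le_0_iff inner_diff_right inner_commute)
  then show ?thesis using proj_in_K by (simp add: mem_edge_iff_maximizer)
qed

definition shell :: "real \<Rightarrow> real \<Rightarrow> real set \<Rightarrow> pt set" where
  "shell r e W = {y. r < dK y \<and> dK y \<le> r + e \<and> (\<exists>t\<in>W. y - proj y = dK y *\<^sub>R uvec t)}"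

lemma local_parallel_eq_shell: "local_parallel K e W = shell 0 e W"
  unfolding local_parallel_def shell_def using dK_pos_iff by auto

lemma shell_mono: "e \<le> e' \<Longrightarrow> shell r e W \<subseteq> shell r e' W"
  by (auto simp: shell_def)

lemma shell_add:
  assumes "r \<ge> 0" "e \<ge> 0"
  shows "shell 0 (r + e) W = shell 0 r W \<union> shell r e W" "shell 0 r W \<inter> shell r e W = {}"
  using assms by (auto simp: shell_def)

lemma bounded_shell: "bounded (shell r e W)"
proof -
  obtain R where R: "\<forall>x\<in>K. norm x \<le> R" using compact_imp_bounded[OF compact_K] bounded_iff by blast
  have "norm y \<le> R + (r + e)" if "y \<in> shell r e W" for y
  proof -
    have "norm y \<le> norm (proj y) + dK y"
      using norm_triangle_ineq[of "proj y" "y - proj y"] by (simp add: dK_eq_norm)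
    also have "\<dots> \<le> R + (r + e)"
      using R proj_in_K[of y] that by (intro add_mono) (auto simp: shell_def)
    finally show ?thesis .
  qed
  then show ?thesis unfolding bounded_iff by blast
qed

lemma shell_borel:
  assumes "r \<ge> 0"
  shows "shell r e {a<..<b} \<in> sets borel"
proof -
  define n where "n y = (1 / dK y) *\<^sub>R (y - proj y)" for y
  have [measurable]: "dK \<in> borel_measurable borel" "proj \<in> borel_measurable borel"
    "uvec ` {a<..<b} \<in> sets borel"
    by (intro borel_measurable_continuous_onI continuous_on_infdist continuous_on_id
        continuous_on_closest_point convex_K closed_K K_nonempty uvec_image_Ioo_borel)+
  have "(y - proj y = dK y *\<^sub>R uvec t) \<longleftrightarrow> n y = uvec t" if "dK y > 0" for y t
  proof
    assume "n y = uvec t"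
    then have "dK y *\<^sub>R n y = dK y *\<^sub>R uvec t" by simp
    then show "y - proj y = dK y *\<^sub>R uvec t" using that by (simp add: n_def)
  qed (use that in \<open>simp add: n_def\<close>)
  then have "shell r e {a<..<b} = {y. r < dK y \<and> dK y \<le> r + e \<and> n y \<in> uvec ` {a<..<b}}"
    using assms unfolding shell_def by force
  also have "\<dots> \<in> sets borel"
    unfolding n_def by measurable
  finally show ?thesis .
qed

lemma shell_lmeasurable: "r \<ge> 0 \<Longrightarrow> shell r e {a<..<b} \<in> lmeasurable"
  by (intro bounded_set_imp_lmeasurable bounded_shell) (simp add: shell_borel)

lemma inward_shift_eq:
  assumes "y - proj y = dK y *\<^sub>R uvec t" "dK y > 0"
  shows "y - r *\<^sub>R sgn (y - proj y) = proj y + (dK y - r) *\<^sub>R uvec t"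
proof -
  have "sgn (y - proj y) = uvec t"
    using assms by (simp add: sgn_scaleR sgn_div_norm)
  moreover have "y = proj y + dK y *\<^sub>R uvec t" using assms(1) by (metis add.commute diff_add_cancel)
  ultimately show ?thesis by (metis add_diff_eq scaleR_left_diff_distrib)
qed

lemma dist_inward_shift_le:
  assumes "r \<ge> 0" "x \<in> shell r e W" "y \<in> shell r e W"
  shows "dist (x - r *\<^sub>R sgn (x - proj x)) (y - r *\<^sub>R sgn (y - proj y)) \<le> dist x y"
proof -
  obtain s t where st: "x - proj x = dK x *\<^sub>R uvec s" "y - proj y = dK y *\<^sub>R uvec t"
    and "r < dK x" "r < dK y"
    using assms(2,3) by (auto simp: shell_def)
  then have "dK x > 0" "dK y > 0" using assms by auto
  then have "proj x \<in> edge K s" "proj y \<in> edge K t"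
    using st by (auto intro!: proj_in_edge simp: dK_pos_iff)
  then have "uvec s \<bullet> (proj y - proj x) \<le> 0" "uvec t \<bullet> (proj x - proj y) \<le> 0"
    using proj_in_K[of x] proj_in_K[of y]
    by (auto simp: mem_edge_iff_maximizer inner_diff_right inner_commute)
  then have "dist (proj x + (dK x - r) *\<^sub>R uvec s) (proj y + (dK y - r) *\<^sub>R uvec t)
      \<le> dist (proj x + (dK x - r + r) *\<^sub>R uvec s) (proj y + (dK y - r + r) *\<^sub>R uvec t)"
    using \<open>r < dK x\<close> \<open>r < dK y\<close> assms(1) by (intro dist_le_dist_add_normals) auto
  also have "\<dots> = dist x y" by (simp add: st[symmetric])
  finally show ?thesis
    by (simp only: inward_shift_eq[OF st(1) \<open>dK x > 0\<close>] inward_shift_eq[OF st(2) \<open>dK y > 0\<close>])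
qed

lemma shell_subset_inward_shift:
  assumes "r \<ge> 0"
  shows "shell 0 e W \<subseteq> (\<lambda>z. z - r *\<^sub>R sgn (z - proj z)) ` shell r e W"
proof
  fix y assume "y \<in> shell 0 e W"
  then obtain t where t: "t \<in> W" "y - proj y = dK y *\<^sub>R uvec t" "0 < dK y" "dK y \<le> e"
    by (auto simp: shell_def)
  then have "proj y \<in> edge K t" by (intro proj_in_edge) (auto simp: dK_pos_iff)
  define z where "z = proj y + (dK y + r) *\<^sub>R uvec t"
  have z: "proj z = proj y" "dK z = dK y + r"
    using proj_normal_ray[OF \<open>proj y \<in> edge K t\<close>, of "dK y + r"] t(3) assms by (simp_all add: z_def)
  then have z_normal: "z - proj z = dK z *\<^sub>R uvec t" "dK z > 0"
    using t(3) assms by (simp_all add: z_def)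
  then have "z - r *\<^sub>R sgn (z - proj z) = proj y + dK y *\<^sub>R uvec t"
    using inward_shift_eq[OF z_normal, of r] z by simp
  also have "\<dots> = y" by (simp add: t(2)[symmetric])
  finally have "z - r *\<^sub>R sgn (z - proj z) = y" .
  moreover have "z \<in> shell r e W"
    using z t z_normal by (auto simp: shell_def)
  ultimately show "y \<in> (\<lambda>z. z - r *\<^sub>R sgn (z - proj z)) ` shell r e W" by blast
qed

lemma measure_shell_le_shift:
  assumes "r \<ge> 0"
  shows "measure lebesgue (shell 0 e {a<..<b}) \<le> measure lebesgue (shell r e {a<..<b})"
proof -
  have "dist (x - r *\<^sub>R sgn (x - proj x)) (y - r *\<^sub>R sgn (y - proj y)) \<le> 1 * dist x y"
    if "x \<in> shell r e {a<..<b}" "y \<in> shell r e {a<..<b}" for x y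
    using dist_inward_shift_le[OF assms that] by simp
  from measure_Lipschitz_image_le[OF shell_lmeasurable[OF assms] zero_less_one this
      shell_lmeasurable shell_subset_inward_shift[OF assms]]
  show ?thesis by simp
qed

abbreviation parallel_area :: "real \<Rightarrow> real \<Rightarrow> real \<Rightarrow> real" where
  "parallel_area a b e \<equiv> measure lebesgue (shell 0 e {a<..<b})"

lemma parallel_area_mono: "e \<le> e' \<Longrightarrow> parallel_area a b e \<le> parallel_area a b e'"
  using shell_lmeasurable[of 0] shell_mono by (intro measure_mono_fmeasurable) auto

lemma parallel_area_superadditive:
  assumes "e > 0"
  shows "real k * parallel_area a b e \<le> parallel_area a b (real k * e)"
proof (induction k)
  case 0
  have "shell 0 0 {a<..<b} = {}" by (auto simp: shell_def)
  then show ?case by simp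
next
  case (Suc k)
  have "parallel_area a b (real k * e + e)
      = parallel_area a b (real k * e) + measure lebesgue (shell (real k * e) e {a<..<b})"
    using shell_add[of "real k * e" e "{a<..<b}"] assms shell_lmeasurable
    by (simp add: measure_Un3)
  moreover have "parallel_area a b e \<le> measure lebesgue (shell (real k * e) e {a<..<b})"
    using assms by (intro measure_shell_le_shift) simp
  ultimately show ?case using Suc.IH by (simp add: algebra_simps)
qed

lemma measure_local_parallel: "measure lborel (local_parallel K e {a<..<b}) = parallel_area a b e"
  unfolding local_parallel_eq_shell using shell_borel[of 0 e a b]
  by (intro measure_completion[symmetric]) simp

lemma sigma_eq_Inf: "sigma K {a<..<b} = (INF e\<in>{0<..}. parallel_area a b e / e)"
  and tendsto_sigma: "((\<lambda>e. parallel_area a b e / e) \<longlongrightarrow> sigma K {a<..<b}) (at_right 0)"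
proof -
  have "((\<lambda>e. parallel_area a b e / e) \<longlongrightarrow> (INF e\<in>{0<..}. parallel_area a b e / e)) (at_right 0)"
    by (rule tendsto_Inf_quotient_superadditive)
       (auto intro: parallel_area_mono parallel_area_superadditive)
  moreover from this have "sigma K {a<..<b} = (INF e\<in>{0<..}. parallel_area a b e / e)"
    unfolding sigma_def measure_local_parallel by (intro tendsto_Lim) auto
  ultimately show "sigma K {a<..<b} = (INF e\<in>{0<..}. parallel_area a b e / e)"
    "((\<lambda>e. parallel_area a b e / e) \<longlongrightarrow> sigma K {a<..<b}) (at_right 0)" by simp_all
qed

lemma sigma_eq_0_if_edges_eq:
  assumes "\<And>s. s \<in> {a<..<b} \<Longrightarrow> edge K s = {q}"
  shows "sigma K {a<..<b} = 0"
proof -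
  define c where "c = measure lebesgue (ball (0::pt) 1)"
  have "parallel_area a b e / e \<le> 4 * c * e" if "e > 0" for e
  proof -
    have "shell 0 e {a<..<b} \<subseteq> ball q (2 * e)"
    proof
      fix y assume "y \<in> shell 0 e {a<..<b}"
      then obtain t where t: "t \<in> {a<..<b}" "y - proj y = dK y *\<^sub>R uvec t" "0 < dK y" "dK y \<le> e"
        by (auto simp: shell_def)
      then have "proj y = q" using proj_in_edge[OF t(2)] assms dK_pos_iff by blast
      then show "y \<in> ball q (2 * e)" using t that by (simp add: dK_eq_norm dist_norm norm_minus_commute)
    qed
    then have "parallel_area a b e \<le> measure lebesgue (ball q (2 * e))"
      using shell_lmeasurable[of 0] by (intro measure_mono_fmeasurable) auto
    also have "\<dots> = 4 * c * e * e"
      using that content_ball_conv_unit_ball[of "2 * e" q] by (simp add: c_def power2_eq_square)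
    finally show ?thesis using that by (simp add: field_simps)
  qed
  then have "eventually (\<lambda>e. parallel_area a b e / e \<le> 4 * c * e) (at_right 0)"
    by (auto simp: eventually_at_right_field intro: exI[of _ 1])
  moreover have "((\<lambda>e. 4 * c * e) \<longlongrightarrow> 4 * c * 0) (at_right 0)"
    by (intro tendsto_intros)
  ultimately have "sigma K {a<..<b} \<le> 4 * c * 0"
    using tendsto_le[OF trivial_limit_at_right_real _ tendsto_sigma] by blast
  moreover have "sigma K {a<..<b} \<ge> 0"
    unfolding sigma_eq_Inf by (intro cINF_greatest) auto
  ultimately show ?thesis by simp
qed

text \<open>The map y \<mapsto> (proj y \<bullet> w, dK y) is \<open>sqrt 2\<close>-Lipschitz and maps the local parallel set
  of width e onto [al1, al2] \<times> (0, e], up to the boundary.\<close>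

lemma sigma_ge_if_levels_attained:
  assumes "norm w = 1" "al1 < al2"
    and levels: "\<And>al. al \<in> {al1..al2} \<Longrightarrow> \<exists>s\<in>{a<..<b}. \<exists>x\<in>edge K s. x \<bullet> w = al"
  shows "sigma K {a<..<b} \<ge> (al2 - al1) / 2"
proof -
  define \<Phi> where "\<Phi> y = (proj y \<bullet> w, dK y)" for y
  have lip: "dist (\<Phi> x) (\<Phi> y) \<le> sqrt 2 * dist x y" for x y
  proof -
    have "\<bar>(proj x - proj y) \<bullet> w\<bar> \<le> norm (proj x - proj y)"
      using Cauchy_Schwarz_ineq2[of "proj x - proj y" w] assms(1) by simp
    also have "\<dots> \<le> dist x y"
      using closest_point_lipschitz[OF convex_K closed_K K_nonempty] by (simp add: dist_norm)
    finally have "\<bar>proj x \<bullet> w - proj y \<bullet> w\<bar> \<le> dist x y" by (simp add: inner_diff_left)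
    moreover have "\<bar>dK x - dK y\<bar> \<le> dist x y" by (rule infdist_triangle_abs)
    ultimately have "(proj x \<bullet> w - proj y \<bullet> w)\<^sup>2 + (dK x - dK y)\<^sup>2 \<le> (dist x y)\<^sup>2 + (dist x y)\<^sup>2"
      by (intro add_mono) (metis abs_le_square_iff abs_of_nonneg zero_le_dist)+
    then have "(dist (\<Phi> x) (\<Phi> y))\<^sup>2 \<le> (dist x y)\<^sup>2 + (dist x y)\<^sup>2"
      by (simp add: \<Phi>_def dist_Pair_Pair dist_real_def)
    also have "\<dots> = (sqrt 2 * dist x y)\<^sup>2" by (simp add: power_mult_distrib)
    finally show ?thesis by (rule power2_le_imp_le) simp
  qed
  have "(al2 - al1) / 2 \<le> parallel_area a b e / e" if "e > 0" for e
  proof -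
    have onto: "box (al1, 0) (al2, e) \<subseteq> \<Phi> ` shell 0 e {a<..<b}"
    proof
      fix z assume "z \<in> box (al1, 0) (al2, e)"
      then obtain al d where z: "z = (al, d)" "al \<in> {al1<..<al2}" "d \<in> {0<..<e}"
        by (metis mem_box_Pair surj_pair)
      then obtain s x where s: "s \<in> {a<..<b}" "x \<in> edge K s" "x \<bullet> w = al" using levels[of al] by auto
      define y where "y = x + d *\<^sub>R uvec s"
      have "proj y = x" "dK y = d" using proj_normal_ray[OF s(2)] z(3) by (simp_all add: y_def)
      then have "y \<in> shell 0 e {a<..<b}" "\<Phi> y = z" using z s by (auto simp: y_def shell_def \<Phi>_def)
      then show "z \<in> \<Phi> ` shell 0 e {a<..<b}" by blast
    qed
    have "(al2 - al1) * e = measure lebesgue (box (al1, 0) (al2, e))"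
      using measure_box_Pair[of al1 al2 0 e] assms(2) that by simp
    also have "\<dots> \<le> sqrt 2 ^ DIM(pt) * parallel_area a b e"
      by (rule measure_Lipschitz_image_le[OF shell_lmeasurable _ _ _ onto]) (use lip in auto)
    finally show ?thesis using that by (simp add: field_simps)
  qed
  then show ?thesis unfolding sigma_eq_Inf by (intro cINF_greatest) auto
qed

lemma sigma_pos_if_levels_attained:
  assumes "x1 \<noteq> x2"
    and "\<And>al. al \<in> {x1 \<bullet> sgn (x2 - x1) .. x2 \<bullet> sgn (x2 - x1)} \<Longrightarrow>
      \<exists>s\<in>{a<..<b}. \<exists>x\<in>edge K s. x \<bullet> sgn (x2 - x1) = al"
  shows "sigma K {a<..<b} > 0"
proof -
  have "x2 \<bullet> sgn (x2 - x1) - x1 \<bullet> sgn (x2 - x1) = (x2 - x1) \<bullet> (x2 - x1) / norm (x2 - x1)"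
    by (simp add: sgn_div_norm inner_diff_left divide_inverse_commute right_diff_distrib)
  also have "\<dots> = norm (x2 - x1)"
    by (simp add: dot_square_norm power2_eq_square)
  finally have width: "x2 \<bullet> sgn (x2 - x1) - x1 \<bullet> sgn (x2 - x1) = norm (x2 - x1)" .
  have "norm (sgn (x2 - x1)) = 1" using assms(1) by (simp add: norm_sgn)
  then have "sigma K {a<..<b} \<ge> (x2 \<bullet> sgn (x2 - x1) - x1 \<bullet> sgn (x2 - x1)) / 2"
    using width assms by (intro sigma_ge_if_levels_attained) (auto simp: algebra_simps)
  moreover have "norm (x2 - x1) > 0" using assms(1) by simp
  ultimately show ?thesis unfolding width by linarith
qed

lemma continuous_on_edge_point:
  assumes "closed S" and q: "\<And>s. s \<in> S \<Longrightarrow> edge K s = {q s}"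
  shows "continuous_on S q"
proof (rule continuous_from_closed_graph[OF compact_K])
  show "q \<in> S \<rightarrow> K" using q by (auto simp: edge_def)
  have "(\<lambda>s. (s, q s)) ` S = {z. fst z \<in> S \<and> snd z \<in> edge K (fst z)}"
    using q by force
  also have "\<dots> = (S \<times> K) \<inter> (\<Inter>k\<in>K. {z. k \<bullet> uvec (fst z) \<le> snd z \<bullet> uvec (fst z)})"
    by (auto simp: mem_edge_iff_maximizer)
  also have "closed \<dots>"
  proof (intro closed_Int closed_Times \<open>closed S\<close> closed_K closed_INT ballI)
    fix k :: pt
    show "closed {z :: real \<times> pt. k \<bullet> uvec (fst z) \<le> snd z \<bullet> uvec (fst z)}"
      by (intro closed_Collect_le continuous_intros continuous_on_compose2[OF continuous_on_uvec]) auto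
  qed
  finally show "closed ((\<lambda>s. (s, q s)) ` S)" .
qed

lemma sigma_pos_if_edge_not_singleton:
  assumes "x1 \<in> edge K s" "x2 \<in> edge K s" "x1 \<noteq> x2" "s \<in> {a<..<b}"
  shows "sigma K {a<..<b} > 0"
proof (rule sigma_pos_if_levels_attained[OF \<open>x1 \<noteq> x2\<close>])
  define w where "w = sgn (x2 - x1)"
  fix al assume al: "al \<in> {x1 \<bullet> sgn (x2 - x1) .. x2 \<bullet> sgn (x2 - x1)}"
  define l where "l = (al - x1 \<bullet> w) / (x2 \<bullet> w - x1 \<bullet> w)"
  have "x1 \<bullet> (x2 - x1) < x2 \<bullet> (x2 - x1)"
    using assms(3) inner_gt_zero_iff[of "x2 - x1"] by (simp add: inner_diff_left)
  then have "x1 \<bullet> w < x2 \<bullet> w" using assms(3) by (simp add: w_def sgn_div_norm)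
  then have "0 \<le> l" "l \<le> 1" using al by (auto simp: l_def w_def field_simps)
  then have "x1 + l *\<^sub>R (x2 - x1) \<in> edge K s"
    using convexD_alt[OF convex_edge assms(1,2), of l] by (simp add: algebra_simps)
  moreover have "(x1 + l *\<^sub>R (x2 - x1)) \<bullet> w = x1 \<bullet> w + l * (x2 \<bullet> w - x1 \<bullet> w)"
    by (simp add: inner_add_left inner_diff_left algebra_simps)
  then have "(x1 + l *\<^sub>R (x2 - x1)) \<bullet> w = al"
    using \<open>x1 \<bullet> w < x2 \<bullet> w\<close> by (simp add: l_def)
  ultimately show "\<exists>s\<in>{a<..<b}. \<exists>x\<in>edge K s. x \<bullet> sgn (x2 - x1) = al"
    using assms(4) by (auto simp: w_def)
qed

lemma sigma_pos_if_edge_point_moves: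
  assumes q: "\<And>s. s \<in> {a<..<b} \<Longrightarrow> edge K s = {q s}"
    and "s1 \<in> {a<..<b}" "s2 \<in> {a<..<b}" "s1 \<le> s2" "q s1 \<noteq> q s2"
  shows "sigma K {a<..<b} > 0"
proof (rule sigma_pos_if_levels_attained[OF \<open>q s1 \<noteq> q s2\<close>])
  fix al assume "al \<in> {q s1 \<bullet> sgn (q s2 - q s1) .. q s2 \<bullet> sgn (q s2 - q s1)}"
  have "{s1..s2} \<subseteq> {a<..<b}" using assms(2,3) by auto
  then have "continuous_on {s1..s2} (\<lambda>s. q s \<bullet> sgn (q s2 - q s1))"
    using q by (intro continuous_intros continuous_on_edge_point) auto
  then obtain s where "s \<in> {s1..s2}" "q s \<bullet> sgn (q s2 - q s1) = al"
    using IVT'[of "\<lambda>s. q s \<bullet> sgn (q s2 - q s1)" s1 al s2] \<open>s1 \<le> s2\<close> \<open>al \<in> _\<close> by auto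
  then show "\<exists>s\<in>{a<..<b}. \<exists>x\<in>edge K s. x \<bullet> sgn (q s2 - q s1) = al"
    using q \<open>{s1..s2} \<subseteq> {a<..<b}\<close> by blast
qed

lemma sigma_pos_if_edges_not_constant:
  assumes "\<nexists>q. \<forall>s\<in>{a<..<b}. edge K s = {q}"
  shows "sigma K {a<..<b} > 0"
proof (cases "\<exists>s\<in>{a<..<b}. \<exists>x1\<in>edge K s. \<exists>x2\<in>edge K s. x1 \<noteq> x2")
  case True
  then obtain s x1 x2 where "s \<in> {a<..<b}" "x1 \<in> edge K s" "x2 \<in> edge K s" "x1 \<noteq> x2" by blast
  then show ?thesis using sigma_pos_if_edge_not_singleton by blast
next
  case False
  then have q: "edge K s = {vplus K s}" if "s \<in> {a<..<b}" for s
    using vplus_edge(1)[where t = s] that by blast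
  obtain s1 where s1: "s1 \<in> {a<..<b}" using assms by blast
  have "\<exists>s2\<in>{a<..<b}. vplus K s1 \<noteq> vplus K s2"
  proof (rule ccontr)
    assume "\<not> (\<exists>s2\<in>{a<..<b}. vplus K s1 \<noteq> vplus K s2)"
    then have "\<forall>s\<in>{a<..<b}. edge K s = {vplus K s1}" using q by auto
    then show False using assms by blast
  qed
  then obtain s2 where s2: "s2 \<in> {a<..<b}" "vplus K s1 \<noteq> vplus K s2" by blast
  show ?thesis
  proof (cases "s1 \<le> s2")
    case True
    from q s1 s2(1) True s2(2) show ?thesis by (rule sigma_pos_if_edge_point_moves)
  next
    case False
    then have "s2 \<le> s1" by simp
    from q s2(1) s1 this s2(2)[symmetric] show ?thesis by (rule sigma_pos_if_edge_point_moves)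
  qed
qed

lemma not_normal_angle_if_edges_constant:
  assumes "\<And>s. s \<in> {t1<..<t2} \<Longrightarrow> edge K s = {p}" "t \<in> {t1<..<t2}"
  shows "t \<notin> normal_angles K"
proof -
  define e where "e = min (t - t1) (t2 - t)"
  then have "e > 0" "{t - e<..<t + e} \<subseteq> {t1<..<t2}" using assms(2) by auto
  then have "sigma K {t - e<..<t + e} = 0" using assms(1) by (intro sigma_eq_0_if_edges_eq) auto
  then show ?thesis
    unfolding normal_angles_def mem_Collect_eq not_all using \<open>e > 0\<close> by (intro exI[of _ e]) simp
qed

lemma edges_locally_constant_if_not_normal_angle:
  assumes "t \<notin> normal_angles K"
  obtains e where "e > 0" "\<And>s. s \<in> {t - e<..<t + e} \<Longrightarrow> edge K s = {vplus K t}"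
proof -
  obtain e where "e > 0" and not_pos: "\<not> sigma K {t - e<..<t + e} > 0"
    using assms unfolding normal_angles_def by blast
  have "\<exists>q. \<forall>s\<in>{t - e<..<t + e}. edge K s = {q}"
  proof (rule ccontr)
    assume "\<nexists>q. \<forall>s\<in>{t - e<..<t + e}. edge K s = {q}"
    then have "sigma K {t - e<..<t + e} > 0" by (rule sigma_pos_if_edges_not_constant)
    with not_pos show False by blast
  qed
  then obtain q where q: "\<forall>s\<in>{t - e<..<t + e}. edge K s = {q}" by blast
  then have "edge K t = {q}" using \<open>e > 0\<close> by simp
  then have "vplus K t = q" by (rule vplus_eqI)
  then show ?thesis using that \<open>e > 0\<close> q by blast
qed

lemma eventually_vplus_eq:
  assumes "e > 0" and e: "\<forall>s\<in>{a - e<..<a + e}. edge K s = {vplus K a}"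
  shows "eventually (\<lambda>b. vplus K a = vplus K b) (at a)"
proof -
  have "eventually (\<lambda>b. b \<in> {a - e<..<a + e}) (at a)"
    using \<open>e > 0\<close> by (intro eventually_at_in_open') auto
  then show ?thesis
  proof eventually_elim
    case (elim b)
    then have "edge K b = {vplus K a}" using e by blast
    then show ?case by (rule vplus_eqI[symmetric])
  qed
qed

lemma edges_constant_if_locally_constant:
  assumes "t1 < t2"
    and local: "\<And>t. t \<in> {t1<..<t2} \<Longrightarrow> \<exists>e>0. \<forall>s\<in>{t - e<..<t + e}. edge K s = {vplus K t}"
  shows "\<exists>p. \<forall>t\<in>{t1<..<t2}. edge K t = {p}"
proof -
  have "eventually (\<lambda>b. vplus K a = vplus K b) (at a within {t1<..<t2})" if a: "a \<in> {t1<..<t2}" for a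
  proof -
    obtain e where "e > 0" "\<forall>s\<in>{a - e<..<a + e}. edge K s = {vplus K a}"
      using local[OF a] by blast
    then have "eventually (\<lambda>b. vplus K a = vplus K b) (at a)" by (rule eventually_vplus_eq)
    then show ?thesis unfolding at_within_open[OF a open_greaterThanLessThan] .
  qed
  then have const: "vplus K s = vplus K t" if "s \<in> {t1<..<t2}" "t \<in> {t1<..<t2}" for s t
    using connected_local_const[OF connected_Ioo that, of "vplus K"] by blast
  have edge_eq: "edge K s = {vplus K t}" if st: "s \<in> {t1<..<t2}" "t \<in> {t1<..<t2}" for s t
  proof -
    obtain e where "e > 0" "\<forall>s'\<in>{s - e<..<s + e}. edge K s' = {vplus K s}"
      using local[OF st(1)] by blast
    then show ?thesis using const[OF st] by simp
  qed
  have "(t1 + t2) / 2 \<in> {t1<..<t2}" using assms(1) by simp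
  then have "\<forall>s\<in>{t1<..<t2}. edge K s = {vplus K ((t1 + t2) / 2)}"
    by (intro ballI edge_eq)
  then show ?thesis ..
qed

lemma normal_angles_disjoint_iff_edges_constant:
  assumes "t1 < t2"
  shows "{t1<..<t2} \<inter> normal_angles K = {} \<longleftrightarrow> (\<exists>p. \<forall>t\<in>{t1<..<t2}. edge K t = {p})"
proof
  assume "{t1<..<t2} \<inter> normal_angles K = {}"
  then show "\<exists>p. \<forall>t\<in>{t1<..<t2}. edge K t = {p}"
    using edges_constant_if_locally_constant[OF assms] edges_locally_constant_if_not_normal_angle
    by (metis disjoint_iff)
qed (use not_normal_angle_if_edges_constant in blast)

end

theorem theoremA50:
  fixes K :: "(real \<times> real) set" and t1 t2 :: real
  assumes "planar_convex_body K" and "t1 < t2" and "t2 - t1 < pi"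
  shows "({t1<..<t2} \<inter> normal_angles K = {}
            \<longleftrightarrow> (\<exists>p. \<forall>t\<in>{t1<..<t2}. vplus K t = p \<and> vminus K t = p))
       \<and> ((\<exists>p. \<forall>t\<in>{t1<..<t2}. vplus K t = p \<and> vminus K t = p)
            \<longleftrightarrow> (\<exists>p. \<forall>t\<in>{t1..t2}. p \<in> tline K t))
       \<and> ((\<exists>p. \<forall>t\<in>{t1..t2}. p \<in> tline K t)
            \<longleftrightarrow> (\<exists>p\<in>K. p \<in> tline K t1 \<inter> tline K t2))"
proof -
  interpret convex_body K
    using assms(1) by unfold_locales (auto simp: planar_convex_body_def)
  show ?thesis
    unfolding vplus_vminus_eq_iff normal_angles_disjoint_iff_edges_constant[OF assms(2)]
      edges_constant_iff_common_tangent_point[OF assms(2,3)]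
      common_tangent_point_iff_mem_tline_ends[OF assms(2,3)]
    by simp
qed

end
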